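(* Let $\alpha=(\alpha_1,\dots,\alpha_t)$ be palindromic (i.e. $\alpha_i=\alpha_{t+1-i}$ for all $i$) with $t$ odd, let $F=\breve F(\alpha)$ with elements $x_1,\dots,x_n$. The statistics $\chi_{x_k}-\chi_{x_{n-k+1}}$ are $0$-mesic under rowmotion for all $k\in[n]$ if and only if the statistics $\hat\chi_{x_k}+\hat\chi_{x_{n-k+1}}$ are $1$-mesic under rowmotion for all $k\in[n]$.
   Context: A fence $\breve F(\alpha_1,\dots,\alpha_t)$ ($t\ge2$, positive integers, $\alpha_1,\alpha_t\ge2$) is the poset on $\{x_1,\dots,x_n\}$, $n=\alpha_1+\dots+\alpha_t-1$, with $a_i=\alpha_1+\dots+\alpha_i$, $a_0=0$, whose cover relations are: for $1\le j\le n-1$ with $a_{i-1}\le j<a_i$, $x_j\lessdot x_{j+1}$ if $i$ odd and $x_j\gtrdot x_{j+1}$ if $i$ even. $\mathcal J(F)$ is the set of order ideals; rowmotion $\rho$ sends $I$ to the order ideal generated by $\min(F\setminus I)$. $\hat\chi_q(I)=1$ if $q\in I$, else 0; $\chi_q(I)=1$ if $q\in\max(I)$, else 0. A statistic is $c$-mesic under rowmotion if its average over every $\rho$-orbit equals $c$. *)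

theory Defs
  imports Complex_Main
begin

definition is_ideal :: "nat set \<Rightarrow> (nat \<Rightarrow> nat \<Rightarrow> bool) \<Rightarrow> nat set \<Rightarrow> bool" where
  "is_ideal P le I \<longleftrightarrow> I \<subseteq> P \<and> (\<forall>x\<in>I. \<forall>y\<in>P. le y x \<longrightarrow> y \<in> I)"

definition ideals :: "nat set \<Rightarrow> (nat \<Rightarrow> nat \<Rightarrow> bool) \<Rightarrow> nat set set" where
  "ideals P le = {I. is_ideal P le I}"

definition min_set :: "(nat \<Rightarrow> nat \<Rightarrow> bool) \<Rightarrow> nat set \<Rightarrow> nat set" where
  "min_set le S = {x\<in>S. \<forall>y\<in>S. le y x \<longrightarrow> y = x}"

definition max_set :: "(nat \<Rightarrow> nat \<Rightarrow> bool) \<Rightarrow> nat set \<Rightarrow> nat set" where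
  "max_set le S = {x\<in>S. \<forall>y\<in>S. le x y \<longrightarrow> y = x}"

definition down_closure :: "nat set \<Rightarrow> (nat \<Rightarrow> nat \<Rightarrow> bool) \<Rightarrow> nat set \<Rightarrow> nat set" where
  "down_closure P le S = {y\<in>P. \<exists>x\<in>S. le y x}"

definition rowmotion :: "nat set \<Rightarrow> (nat \<Rightarrow> nat \<Rightarrow> bool) \<Rightarrow> nat set \<Rightarrow> nat set" where
  "rowmotion P le I = down_closure P le (min_set le (P - I))"

definition rho_orbit :: "nat set \<Rightarrow> (nat \<Rightarrow> nat \<Rightarrow> bool) \<Rightarrow> nat set \<Rightarrow> nat set set" where
  "rho_orbit P le I = {(rowmotion P le ^^ k) I | k. True}"

definition mesic :: "nat set \<Rightarrow> (nat \<Rightarrow> nat \<Rightarrow> bool) \<Rightarrow> (nat set \<Rightarrow> real) \<Rightarrow> real \<Rightarrow> bool" where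
  "mesic P le f c \<longleftrightarrow>
     (\<forall>I\<in>ideals P le. (\<Sum>J\<in>rho_orbit P le I. f J) / real (card (rho_orbit P le I)) = c)"

definition hat_chi :: "nat \<Rightarrow> nat set \<Rightarrow> real" where
  "hat_chi q I = (if q \<in> I then 1 else 0)"

definition chi :: "(nat \<Rightarrow> nat \<Rightarrow> bool) \<Rightarrow> nat \<Rightarrow> nat set \<Rightarrow> real" where
  "chi le q I = (if q \<in> max_set le I then 1 else 0)"

section \<open>Fences; element x_j is represented by the natural number j\<close>

definition fence_a :: "nat list \<Rightarrow> nat \<Rightarrow> nat" where
  "fence_a \<alpha> i = sum_list (take i \<alpha>)"

definition fence_n :: "nat list \<Rightarrow> nat" where
  "fence_n \<alpha> = sum_list \<alpha> - 1"

definition fence_elems :: "nat list \<Rightarrow> nat set" where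
  "fence_elems \<alpha> = {1..fence_n \<alpha>}"

definition fence_block :: "nat list \<Rightarrow> nat \<Rightarrow> nat" where
  "fence_block \<alpha> j = (LEAST i. j < fence_a \<alpha> i)"

definition fence_cover :: "nat list \<Rightarrow> nat \<Rightarrow> nat \<Rightarrow> bool" where
  "fence_cover \<alpha> x y \<longleftrightarrow>
     (1 \<le> x \<and> x \<le> fence_n \<alpha> - 1 \<and> y = x + 1 \<and> odd (fence_block \<alpha> x)) \<or>
     (1 \<le> y \<and> y \<le> fence_n \<alpha> - 1 \<and> x = y + 1 \<and> even (fence_block \<alpha> y))"

definition fence_le :: "nat list \<Rightarrow> nat \<Rightarrow> nat \<Rightarrow> bool" where
  "fence_le \<alpha> = (fence_cover \<alpha>)\<^sup>*\<^sup>*"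

end

theory Submission
  imports Defs
begin

text \<open>Let h(q) and c(q) be the sums of hat_chi q and chi q over a rowmotion orbit of size N.
  Since the maximal elements of \<rho>(J) are the minimal elements of F - J and \<rho> permutes the
  orbit, c(p) = h(p) for maximal p, c(p) = N - h(p) for minimal p, c(p) = h(p) - h(a) if a is
  the only upper cover of p, and c(p) = h(b) - h(p) if b is the only lower cover of p.
  For palindromic \<alpha> of odd length, \<phi>(k) = n - k + 1 is an antiautomorphism of the fence, so
  with the defect D(q) = h(q) + h(\<phi> q) - N the difference c(k) - c(\<phi> k) is \<plusminus>D(k) at
  extremal elements and \<plusminus>(D(k) - D(c)) for each neighbour c of any other element.
  Hence D = 0 forces c(k) = c(\<phi> k); conversely, c(k) = c(\<phi> k) for all k propagates
  D(k) = 0 from the extremal element 1 along the fence.\<close>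

lemma rtranclp_antisym_if_adjacent_asym:
  fixes r :: "nat \<Rightarrow> nat \<Rightarrow> bool"
  assumes adjacent: "\<And>x y. r x y \<Longrightarrow> y = Suc x \<or> x = Suc y"
    and asym: "\<And>x y. r x y \<Longrightarrow> \<not> r y x"
    and "r\<^sup>*\<^sup>* x y" "r\<^sup>*\<^sup>* y x"
  shows "x = y"
proof -
  have path: "(\<forall>j. x \<le> j \<and> j < y \<longrightarrow> r j (Suc j)) \<and> (\<forall>j. y \<le> j \<and> j < x \<longrightarrow> r (Suc j) j)"
    if "r\<^sup>*\<^sup>* x y" for x y
    using that
  proof (induction rule: rtranclp_induct)
    case (step y z)
    from adjacent[OF step.hyps(2)] show ?case
      using step by (auto simp: less_Suc_eq le_Suc_eq) (metis Suc_leI le_neq_implies_less)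
  qed auto
  show ?thesis
  proof (rule ccontr)
    assume "x \<noteq> y"
    then obtain i where "r i (Suc i)" "r (Suc i) i"
      using path[OF assms(3)] path[OF assms(4)] by (metis linorder_neqE_nat order_refl)
    then show False using asym by blast
  qed
qed

locale cover_poset =
  fixes P :: "nat set" and cov :: "nat \<Rightarrow> nat \<Rightarrow> bool"
  assumes finite_P: "finite P"
    and cov_in: "cov x y \<Longrightarrow> x \<in> P \<and> y \<in> P"
    and cov_irrefl: "\<not> cov x x"
    and le_antisym: "cov\<^sup>*\<^sup>* x y \<Longrightarrow> cov\<^sup>*\<^sup>* y x \<Longrightarrow> x = y"
begin

abbreviation le :: "nat \<Rightarrow> nat \<Rightarrow> bool" where "le \<equiv> cov\<^sup>*\<^sup>*"
abbreviation rho :: "nat set \<Rightarrow> nat set" where "rho \<equiv> rowmotion P le"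
abbreviation orbit :: "nat set \<Rightarrow> nat set set" where "orbit \<equiv> rho_orbit P le"

lemma ideal_subset: "I \<in> ideals P le \<Longrightarrow> I \<subseteq> P"
  by (simp add: ideals_def is_ideal_def)

lemma ideal_down_closed: "I \<in> ideals P le \<Longrightarrow> x \<in> I \<Longrightarrow> y \<in> P \<Longrightarrow> le y x \<Longrightarrow> y \<in> I"
  by (simp add: ideals_def is_ideal_def)

lemma rowmotion_in_ideals: "rho I \<in> ideals P le"
  unfolding ideals_def is_ideal_def rowmotion_def down_closure_def
  by (auto intro: rtranclp_trans)

lemma max_set_ideal_iff:
  assumes "I \<in> ideals P le"
  shows "x \<in> max_set le I \<longleftrightarrow> x \<in> I \<and> (\<forall>z. cov x z \<longrightarrow> z \<notin> I)"
proof
  assume "x \<in> max_set le I"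
  then show "x \<in> I \<and> (\<forall>z. cov x z \<longrightarrow> z \<notin> I)"
    unfolding max_set_def using cov_irrefl by fastforce
next
  assume x: "x \<in> I \<and> (\<forall>z. cov x z \<longrightarrow> z \<notin> I)"
  have "y = x" if "y \<in> I" "le x y" for y
    using that(2)
  proof (cases rule: converse_rtranclpE)
    case (step z)
    then have "z \<in> I" using ideal_down_closed[OF assms that(1)] cov_in by blast
    then show ?thesis using x step by blast
  qed simp
  then show "x \<in> max_set le I" using x unfolding max_set_def by blast
qed

lemma min_set_complement_iff:
  assumes "I \<in> ideals P le"
  shows "x \<in> min_set le (P - I) \<longleftrightarrow> x \<in> P \<and> x \<notin> I \<and> (\<forall>z. cov z x \<longrightarrow> z \<in> I)"
proof
  assume "x \<in> min_set le (P - I)"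
  then have x: "x \<in> P" "x \<notin> I" "\<forall>y\<in>P - I. le y x \<longrightarrow> y = x"
    unfolding min_set_def by auto
  have "z \<in> I" if "cov z x" for z
    using x(3) cov_in[OF that] cov_irrefl that by blast
  then show "x \<in> P \<and> x \<notin> I \<and> (\<forall>z. cov z x \<longrightarrow> z \<in> I)" using x by blast
next
  assume x: "x \<in> P \<and> x \<notin> I \<and> (\<forall>z. cov z x \<longrightarrow> z \<in> I)"
  have "y = x" if "y \<in> P - I" "le y x" for y
    using that(2)
  proof (cases rule: rtranclp.cases)
    case (rtrancl_into_rtrancl z)
    then have "y \<in> I" using x ideal_down_closed[OF assms] that(1) by blast
    then show ?thesis using that(1) by blast
  qed simp
  then show "x \<in> min_set le (P - I)" using x unfolding min_set_def by blast
qed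

lemma max_set_rowmotion: "max_set le (rho I) = min_set le (P - I)"
proof
  show "max_set le (rho I) \<subseteq> min_set le (P - I)"
  proof
    fix x assume x: "x \<in> max_set le (rho I)"
    then obtain m where m: "m \<in> min_set le (P - I)" "le x m"
      unfolding max_set_def rowmotion_def down_closure_def by blast
    have "m \<in> rho I" using m unfolding rowmotion_def down_closure_def min_set_def by auto
    then have "m = x" using x m(2) unfolding max_set_def by blast
    then show "x \<in> min_set le (P - I)" using m by simp
  qed
next
  show "min_set le (P - I) \<subseteq> max_set le (rho I)"
  proof
    fix x assume x: "x \<in> min_set le (P - I)"
    have "y = x" if y: "y \<in> rho I" and xy: "le x y" for y
    proof -
      obtain m where m: "m \<in> min_set le (P - I)" "le y m"
        using y unfolding rowmotion_def down_closure_def by blast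
      have "x = m" using rtranclp_trans[OF xy m(2)] m(1) x unfolding min_set_def by blast
      then show ?thesis using le_antisym xy m(2) by blast
    qed
    moreover have "x \<in> rho I" using x unfolding rowmotion_def down_closure_def min_set_def by auto
    ultimately show "x \<in> max_set le (rho I)" unfolding max_set_def by blast
  qed
qed

lemma min_set_below:
  assumes "S \<subseteq> P" "x \<in> S"
  shows "\<exists>m\<in>min_set le S. le m x"
  using assms(2)
proof (induction "card {y\<in>P. le y x}" arbitrary: x rule: less_induct)
  case less
  show ?case
  proof (cases "x \<in> min_set le S")
    case False
    then obtain y where y: "y \<in> S" "le y x" "y \<noteq> x"
      using less.prems unfolding min_set_def by blast
    have "{z\<in>P. le z y} \<subseteq> {z\<in>P. le z x}"
      using rtranclp_trans[OF _ y(2)] by blast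
    moreover have "x \<in> {z\<in>P. le z x} - {z\<in>P. le z y}"
      using le_antisym y(2,3) less.prems assms(1) by blast
    ultimately have "card {z\<in>P. le z y} < card {z\<in>P. le z x}"
      using finite_P by (intro psubset_card_mono) auto
    then obtain m where "m \<in> min_set le S" "le m y" using less.hyps[OF _ y(1)] by blast
    then show ?thesis using rtranclp_trans[OF _ y(2)] by blast
  qed blast
qed

lemma ideal_eq_complement_up_closure:
  assumes "I \<in> ideals P le"
  shows "I = P - {x\<in>P. \<exists>m\<in>min_set le (P - I). le m x}"
proof -
  have "x \<notin> I" if "m \<in> min_set le (P - I)" "le m x" for x m
    using that ideal_down_closed[OF assms] unfolding min_set_def by blast
  then show ?thesis using min_set_below[of "P - I"] ideal_subset[OF assms] by blast
qed

lemma inj_on_rowmotion: "inj_on rho (ideals P le)"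
proof (rule inj_onI)
  fix I J assume I: "I \<in> ideals P le" and J: "J \<in> ideals P le" and "rho I = rho J"
  then have min_eq: "min_set le (P - I) = min_set le (P - J)"
    by (simp flip: max_set_rowmotion)
  have "I = P - {x\<in>P. \<exists>m\<in>min_set le (P - I). le m x}"
    by (rule ideal_eq_complement_up_closure[OF I])
  also have "\<dots> = J"
    unfolding min_eq by (rule ideal_eq_complement_up_closure[OF J, symmetric])
  finally show "I = J" .
qed

lemma orbit_subset_ideals: "I \<in> ideals P le \<Longrightarrow> orbit I \<subseteq> ideals P le"
proof -
  assume I: "I \<in> ideals P le"
  have "(rho ^^ k) I \<in> ideals P le" for k
    by (cases k) (use I rowmotion_in_ideals in auto)
  then show ?thesis unfolding rho_orbit_def by blast
qed

lemma finite_orbit: "I \<in> ideals P le \<Longrightarrow> finite (orbit I)"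
proof (rule finite_subset)
  show "I \<in> ideals P le \<Longrightarrow> orbit I \<subseteq> Pow P"
    using orbit_subset_ideals ideal_subset by blast
qed (simp add: finite_P)

lemma card_orbit_pos:
  assumes "I \<in> ideals P le"
  shows "card (orbit I) > 0"
proof -
  have "I \<in> orbit I" unfolding rho_orbit_def by (auto intro: exI[of _ 0])
  then show ?thesis using finite_orbit[OF assms] card_gt_0_iff by blast
qed

lemma inj_on_orbit: "I \<in> ideals P le \<Longrightarrow> inj_on rho (orbit I)"
  using inj_on_rowmotion orbit_subset_ideals inj_on_subset by blast

lemma rowmotion_image_orbit:
  assumes "I \<in> ideals P le"
  shows "rho ` orbit I = orbit I"
proof -
  have "rho ` orbit I \<subseteq> orbit I"
    unfolding rho_orbit_def by (auto intro: exI[of _ "Suc _"])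
  then show ?thesis using endo_inj_surj finite_orbit[OF assms] inj_on_orbit[OF assms] by blast
qed

lemma sum_orbit_rowmotion:
  assumes "I \<in> ideals P le"
  shows "(\<Sum>J\<in>orbit I. f (rho J)) = (\<Sum>J\<in>orbit I. (f J :: real))"
proof -
  have "(\<Sum>J\<in>rho ` orbit I. f J) = (\<Sum>J\<in>orbit I. f (rho J))"
    using inj_on_orbit[OF assms] by (simp add: sum.reindex)
  then show ?thesis using rowmotion_image_orbit[OF assms] by simp
qed

definition hat_chi_sum :: "nat set \<Rightarrow> nat \<Rightarrow> real" where
  "hat_chi_sum I q = (\<Sum>J\<in>orbit I. hat_chi q J)"

definition chi_sum :: "nat set \<Rightarrow> nat \<Rightarrow> real" where
  "chi_sum I q = (\<Sum>J\<in>orbit I. chi le q J)"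

definition orbit_card :: "nat set \<Rightarrow> real" where
  "orbit_card I = real (card (orbit I))"

lemma mesic_iff_orbit_sum:
  "mesic P le f c \<longleftrightarrow> (\<forall>I\<in>ideals P le. (\<Sum>J\<in>orbit I. f J) = c * orbit_card I)"
proof -
  have "(\<Sum>J\<in>orbit I. f J) / real (card (orbit I)) = c \<longleftrightarrow> (\<Sum>J\<in>orbit I. f J) = c * orbit_card I"
    if "I \<in> ideals P le" for I
    using card_orbit_pos[OF that] unfolding orbit_card_def by (simp add: divide_eq_eq)
  then show ?thesis unfolding mesic_def by blast
qed

lemma chi_sum_of_maximal:
  assumes "I \<in> ideals P le" "\<forall>z. \<not> cov p z"
  shows "chi_sum I p = hat_chi_sum I p"
  unfolding chi_sum_def hat_chi_sum_def
proof (rule sum.cong[OF refl])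
  fix J assume "J \<in> orbit I"
  then have "p \<in> max_set le J \<longleftrightarrow> p \<in> J"
    using max_set_ideal_iff orbit_subset_ideals[OF assms(1)] assms(2) by blast
  then show "chi le p J = hat_chi p J" unfolding chi_def hat_chi_def by simp
qed

lemma chi_sum_of_unique_upper_cover:
  assumes "I \<in> ideals P le" "cov p a" "\<forall>z. cov p z \<longrightarrow> z = a"
  shows "chi_sum I p = hat_chi_sum I p - hat_chi_sum I a"
  unfolding chi_sum_def hat_chi_sum_def sum_subtractf[symmetric]
proof (rule sum.cong[OF refl])
  fix J assume "J \<in> orbit I"
  then have J: "J \<in> ideals P le" using orbit_subset_ideals[OF assms(1)] by blast
  have "a \<in> J \<Longrightarrow> p \<in> J" using ideal_down_closed[OF J] assms(2) cov_in by blast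
  moreover have "p \<in> max_set le J \<longleftrightarrow> p \<in> J \<and> a \<notin> J"
    unfolding max_set_ideal_iff[OF J] using assms(2,3) by blast
  ultimately show "chi le p J = hat_chi p J - hat_chi a J"
    unfolding chi_def hat_chi_def by auto
qed

lemma chi_sum_of_minimal:
  assumes "I \<in> ideals P le" "p \<in> P" "\<forall>z. \<not> cov z p"
  shows "chi_sum I p = orbit_card I - hat_chi_sum I p"
proof -
  have "chi_sum I p = (\<Sum>J\<in>orbit I. chi le p (rho J))"
    unfolding chi_sum_def by (rule sum_orbit_rowmotion[OF assms(1), symmetric])
  also have "\<dots> = (\<Sum>J\<in>orbit I. 1 - hat_chi p J)"
  proof (rule sum.cong[OF refl])
    fix J assume "J \<in> orbit I"
    then have "p \<in> max_set le (rho J) \<longleftrightarrow> p \<notin> J"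
      unfolding max_set_rowmotion
      using min_set_complement_iff orbit_subset_ideals[OF assms(1)] assms(2,3) by blast
    then show "chi le p (rho J) = 1 - hat_chi p J" unfolding chi_def hat_chi_def by simp
  qed
  also have "\<dots> = orbit_card I - hat_chi_sum I p"
    unfolding hat_chi_sum_def orbit_card_def sum_subtractf by simp
  finally show ?thesis .
qed

lemma chi_sum_of_unique_lower_cover:
  assumes "I \<in> ideals P le" "p \<in> P" "cov b p" "\<forall>z. cov z p \<longrightarrow> z = b"
  shows "chi_sum I p = hat_chi_sum I b - hat_chi_sum I p"
proof -
  have "chi_sum I p = (\<Sum>J\<in>orbit I. chi le p (rho J))"
    unfolding chi_sum_def by (rule sum_orbit_rowmotion[OF assms(1), symmetric])
  also have "\<dots> = (\<Sum>J\<in>orbit I. hat_chi b J - hat_chi p J)"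
  proof (rule sum.cong[OF refl])
    fix J assume "J \<in> orbit I"
    then have J: "J \<in> ideals P le" using orbit_subset_ideals[OF assms(1)] by blast
    have "p \<in> J \<Longrightarrow> b \<in> J" using ideal_down_closed[OF J] assms(3) cov_in by blast
    moreover have "p \<in> max_set le (rho J) \<longleftrightarrow> p \<notin> J \<and> b \<in> J"
      unfolding max_set_rowmotion min_set_complement_iff[OF J] using assms(2,3,4) by blast
    ultimately show "chi le p (rho J) = hat_chi b J - hat_chi p J"
      unfolding chi_def hat_chi_def by auto
  qed
  also have "\<dots> = hat_chi_sum I b - hat_chi_sum I p"
    unfolding hat_chi_sum_def sum_subtractf by simp
  finally show ?thesis .
qed

end

locale cover_poset_antiautomorphism = cover_poset +
  fixes \<phi> :: "nat \<Rightarrow> nat"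
  assumes \<phi>_in: "p \<in> P \<Longrightarrow> \<phi> p \<in> P"
    and \<phi>_involutive: "p \<in> P \<Longrightarrow> \<phi> (\<phi> p) = p"
    and cov_\<phi>: "cov x y \<Longrightarrow> cov (\<phi> y) (\<phi> x)"
begin

lemma cov_\<phi>_left: "p \<in> P \<Longrightarrow> cov (\<phi> p) z \<Longrightarrow> cov (\<phi> z) p"
  using cov_\<phi> \<phi>_involutive by metis

lemma cov_\<phi>_right: "p \<in> P \<Longrightarrow> cov z (\<phi> p) \<Longrightarrow> cov p (\<phi> z)"
  using cov_\<phi> \<phi>_involutive by metis

definition defect :: "nat set \<Rightarrow> nat \<Rightarrow> real" where
  "defect I q = hat_chi_sum I q + hat_chi_sum I (\<phi> q) - orbit_card I"

lemma defect_\<phi>: "q \<in> P \<Longrightarrow> defect I (\<phi> q) = defect I q"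
  unfolding defect_def using \<phi>_involutive by simp

lemma chi_sum_diff_of_maximal:
  assumes "I \<in> ideals P le" "p \<in> P" "\<forall>z. \<not> cov p z"
  shows "chi_sum I p - chi_sum I (\<phi> p) = defect I p"
proof -
  have "\<forall>z. \<not> cov z (\<phi> p)" using cov_\<phi>_right assms(2,3) by blast
  then have "chi_sum I (\<phi> p) = orbit_card I - hat_chi_sum I (\<phi> p)"
    using chi_sum_of_minimal assms(1,2) \<phi>_in by blast
  then show ?thesis using chi_sum_of_maximal[OF assms(1,3)] unfolding defect_def by simp
qed

lemma chi_sum_diff_of_minimal:
  assumes "I \<in> ideals P le" "p \<in> P" "\<forall>z. \<not> cov z p"
  shows "chi_sum I p - chi_sum I (\<phi> p) = - defect I p"
proof -
  have "\<forall>z. \<not> cov (\<phi> p) z" using cov_\<phi>_left assms(2,3) by blast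
  then have "chi_sum I (\<phi> p) - chi_sum I p = defect I p"
    using chi_sum_diff_of_maximal[OF assms(1) \<phi>_in[OF assms(2)]] assms(2)
    by (simp add: \<phi>_involutive defect_\<phi>)
  then show ?thesis by simp
qed

lemma chi_sum_diff_of_unique_upper_cover:
  assumes "I \<in> ideals P le" "p \<in> P" "cov p a" "\<forall>z. cov p z \<longrightarrow> z = a"
  shows "chi_sum I p - chi_sum I (\<phi> p) = defect I p - defect I a"
proof -
  have "\<forall>z. cov z (\<phi> p) \<longrightarrow> z = \<phi> a"
    using cov_\<phi>_right[OF assms(2)] assms(4) cov_in \<phi>_involutive by metis
  then have "chi_sum I (\<phi> p) = hat_chi_sum I (\<phi> a) - hat_chi_sum I (\<phi> p)"
    using chi_sum_of_unique_lower_cover assms(1,2,3) \<phi>_in cov_\<phi> by blast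
  then show ?thesis using chi_sum_of_unique_upper_cover[OF assms(1,3,4)]
    unfolding defect_def by simp
qed

lemma chi_sum_diff_of_unique_lower_cover:
  assumes "I \<in> ideals P le" "p \<in> P" "cov b p" "\<forall>z. cov z p \<longrightarrow> z = b"
  shows "chi_sum I p - chi_sum I (\<phi> p) = defect I b - defect I p"
proof -
  have b: "b \<in> P" using assms(3) cov_in by blast
  have "\<forall>z. cov (\<phi> p) z \<longrightarrow> z = \<phi> b"
    using cov_\<phi>_left[OF assms(2)] assms(4) cov_in \<phi>_involutive by metis
  then have "chi_sum I (\<phi> p) - chi_sum I p = defect I p - defect I b"
    using chi_sum_diff_of_unique_upper_cover[OF assms(1) \<phi>_in[OF assms(2)] cov_\<phi>[OF assms(3)]]
      assms(2) b by (simp add: \<phi>_involutive defect_\<phi>)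
  then show ?thesis by simp
qed

end

lemma fence_cover_in: "fence_cover \<alpha> x y \<Longrightarrow> x \<in> {1..fence_n \<alpha>} \<and> y \<in> {1..fence_n \<alpha>}"
  unfolding fence_cover_def by auto

lemma fence_cover_adjacent: "fence_cover \<alpha> x y \<Longrightarrow> y = Suc x \<or> x = Suc y"
  unfolding fence_cover_def by auto

lemma fence_cover_asym: "fence_cover \<alpha> x y \<Longrightarrow> \<not> fence_cover \<alpha> y x"
  unfolding fence_cover_def by auto

lemma cover_poset_fence: "cover_poset {1..fence_n \<alpha>} (fence_cover \<alpha>)"
proof
  show "(fence_cover \<alpha>)\<^sup>*\<^sup>* x y \<Longrightarrow> (fence_cover \<alpha>)\<^sup>*\<^sup>* y x \<Longrightarrow> x = y" for x y
    by (rule rtranclp_antisym_if_adjacent_asym[OF fence_cover_adjacent fence_cover_asym])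
qed (use fence_cover_in fence_cover_asym in blast)+

lemma fence_cover_unique_upper:
  "fence_cover \<alpha> k a \<Longrightarrow> fence_cover \<alpha> b k \<Longrightarrow> fence_cover \<alpha> k z \<Longrightarrow> z = a"
  using fence_cover_adjacent fence_cover_asym by (metis Suc_inject n_not_Suc_n)

lemma fence_cover_unique_lower:
  "fence_cover \<alpha> k a \<Longrightarrow> fence_cover \<alpha> b k \<Longrightarrow> fence_cover \<alpha> z k \<Longrightarrow> z = b"
  using fence_cover_adjacent fence_cover_asym by (metis Suc_inject n_not_Suc_n)

lemma fence_cover_predecessor:
  "fence_cover \<alpha> k a \<Longrightarrow> fence_cover \<alpha> b k \<Longrightarrow> a = k - 1 \<or> b = k - 1"
  using fence_cover_adjacent fence_cover_asym by (metis diff_Suc_1)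

lemma fence_a_mono: "i \<le> j \<Longrightarrow> fence_a \<alpha> i \<le> fence_a \<alpha> j"
  by (metis fence_a_def le_Suc_ex sum_list_append take_add le_add1)

lemma fence_block_bounds:
  assumes "j < sum_list \<alpha>"
  shows "1 \<le> fence_block \<alpha> j" "fence_block \<alpha> j \<le> length \<alpha>"
    "fence_a \<alpha> (fence_block \<alpha> j - 1) \<le> j" "j < fence_a \<alpha> (fence_block \<alpha> j)"
proof -
  have length: "j < fence_a \<alpha> (length \<alpha>)" using assms by (simp add: fence_a_def)
  show upper: "j < fence_a \<alpha> (fence_block \<alpha> j)"
    unfolding fence_block_def using LeastI[of "\<lambda>i. j < fence_a \<alpha> i", OF length] .
  show "fence_block \<alpha> j \<le> length \<alpha>"
    unfolding fence_block_def using length by (rule Least_le)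
  show "1 \<le> fence_block \<alpha> j"
    using upper by (cases "fence_block \<alpha> j") (auto simp: fence_a_def)
  then show "fence_a \<alpha> (fence_block \<alpha> j - 1) \<le> j"
    using not_less_Least[of "fence_block \<alpha> j - 1" "\<lambda>i. j < fence_a \<alpha> i"]
    unfolding fence_block_def by simp
qed

lemma fence_block_eqI:
  assumes "1 \<le> i" "fence_a \<alpha> (i - 1) \<le> j" "j < fence_a \<alpha> i"
  shows "fence_block \<alpha> j = i"
  unfolding fence_block_def
proof (rule Least_equality)
  show "i \<le> m" if "j < fence_a \<alpha> m" for m
    using that assms fence_a_mono[of m "i - 1" \<alpha>] by linarith
qed fact

lemma fence_a_rev:
  assumes "rev \<alpha> = \<alpha>" "i \<le> length \<alpha>"
  shows "fence_a \<alpha> (length \<alpha> - i) = sum_list \<alpha> - fence_a \<alpha> i"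
proof -
  have "take i \<alpha> = rev (drop (length \<alpha> - i) \<alpha>)"
    by (metis assms(1) take_rev)
  then have "fence_a \<alpha> i = sum_list (drop (length \<alpha> - i) \<alpha>)"
    by (simp add: fence_a_def)
  moreover have "sum_list \<alpha> = fence_a \<alpha> (length \<alpha> - i) + sum_list (drop (length \<alpha> - i) \<alpha>)"
    by (metis append_take_drop_id fence_a_def sum_list_append)
  ultimately show ?thesis by simp
qed

lemma fence_block_reflect:
  assumes "rev \<alpha> = \<alpha>" "j < fence_n \<alpha>"
  shows "fence_block \<alpha> (fence_n \<alpha> - j) = length \<alpha> + 1 - fence_block \<alpha> j"
proof -
  define i where "i = fence_block \<alpha> j"
  have j: "j + 2 \<le> sum_list \<alpha>" using assms(2) by (simp add: fence_n_def)
  note bounds = fence_block_bounds[of j \<alpha>, folded i_def]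
  have lower: "fence_a \<alpha> (length \<alpha> - i) \<le> fence_n \<alpha> - j"
    using fence_a_rev[OF assms(1), of i] bounds j by (simp add: fence_n_def)
  have upper: "fence_n \<alpha> - j < fence_a \<alpha> (length \<alpha> - (i - 1))"
    using fence_a_rev[OF assms(1), of "i - 1"] bounds j by (simp add: fence_n_def)
  show ?thesis
    unfolding i_def[symmetric] using lower upper bounds j
    by (intro fence_block_eqI) (simp_all add: Suc_diff_le)
qed

locale palindromic_fence =
  fixes \<alpha> :: "nat list"
  assumes palindrome: "rev \<alpha> = \<alpha>"
    and odd_length: "odd (length \<alpha>)"
begin

abbreviation n :: nat where "n \<equiv> fence_n \<alpha>"
abbreviation cov :: "nat \<Rightarrow> nat \<Rightarrow> bool" where "cov \<equiv> fence_cover \<alpha>"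

lemma even_fence_block_reflect:
  assumes "j < n"
  shows "even (fence_block \<alpha> (n - j)) \<longleftrightarrow> even (fence_block \<alpha> j)"
proof -
  have "fence_block \<alpha> j \<le> length \<alpha>"
    using fence_block_bounds assms by (simp add: fence_n_def)
  then show ?thesis
    using fence_block_reflect[OF palindrome assms] odd_length by auto
qed

lemma fence_cover_reflect: "cov x y \<Longrightarrow> cov (n - y + 1) (n - x + 1)"
  unfolding fence_cover_def
  using even_fence_block_reflect by (auto simp: Suc_diff_Suc)

sublocale cover_poset_antiautomorphism "{1..n}" cov "\<lambda>k. n - k + 1"
proof (rule cover_poset_antiautomorphism.intro[OF cover_poset_fence], unfold_locales)
  show "cov x y \<Longrightarrow> cov (n - y + 1) (n - x + 1)" for x y
    by (rule fence_cover_reflect)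
qed auto

lemma chi_sum_diff_of_interior:
  assumes "I \<in> ideals {1..n} le" "cov k a" "cov b k"
  shows "chi_sum I k - chi_sum I (n - k + 1) = defect I k - defect I a"
    and "chi_sum I k - chi_sum I (n - k + 1) = defect I b - defect I k"
proof -
  have k: "k \<in> {1..n}" using assms(2) fence_cover_in by blast
  show "chi_sum I k - chi_sum I (n - k + 1) = defect I k - defect I a"
    using fence_cover_unique_upper[OF assms(2,3)]
    by (intro chi_sum_diff_of_unique_upper_cover[OF assms(1) k assms(2)]) blast
  show "chi_sum I k - chi_sum I (n - k + 1) = defect I b - defect I k"
    using fence_cover_unique_lower[OF assms(2,3)]
    by (intro chi_sum_diff_of_unique_lower_cover[OF assms(1) k assms(3)]) blast
qed

lemma defect_eq_0_if_chi_sums_symmetric: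
  assumes I: "I \<in> ideals {1..n} le"
    and symmetric: "\<forall>k\<in>{1..n}. chi_sum I k = chi_sum I (n - k + 1)"
    and "k \<in> {1..n}"
  shows "defect I k = 0"
  using \<open>k \<in> {1..n}\<close>
proof (induction k rule: less_induct)
  case (less k)
  have diff: "chi_sum I k - chi_sum I (n - k + 1) = 0" using symmetric less.prems by simp
  consider "\<forall>z. \<not> cov k z" | "\<forall>z. \<not> cov z k" | a b where "cov k a" "cov b k" by blast
  then show ?case
  proof cases
    case 1
    then show ?thesis using chi_sum_diff_of_maximal[OF I less.prems] diff by simp
  next
    case 2
    then show ?thesis using chi_sum_diff_of_minimal[OF I less.prems] diff by simp
  next
    case (3 a b)
    have "a \<in> {1..n}" "b \<in> {1..n}" using 3 fence_cover_in by blast+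
    with fence_cover_predecessor[OF 3] less.IH
    have "defect I a = 0 \<or> defect I b = 0" by force
    then show ?thesis using chi_sum_diff_of_interior[OF I 3] diff by auto
  qed
qed

lemma chi_sums_symmetric_iff_defect_eq_0:
  assumes I: "I \<in> ideals {1..n} le"
  shows "(\<forall>k\<in>{1..n}. chi_sum I k = chi_sum I (n - k + 1)) \<longleftrightarrow> (\<forall>k\<in>{1..n}. defect I k = 0)"
proof
  assume "\<forall>k\<in>{1..n}. chi_sum I k = chi_sum I (n - k + 1)"
  then show "\<forall>k\<in>{1..n}. defect I k = 0" using defect_eq_0_if_chi_sums_symmetric[OF I] by blast
next
  assume zero: "\<forall>k\<in>{1..n}. defect I k = 0"
  show "\<forall>k\<in>{1..n}. chi_sum I k = chi_sum I (n - k + 1)"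
  proof
    fix k assume k: "k \<in> {1..n}"
    consider "\<forall>z. \<not> cov k z" | "\<forall>z. \<not> cov z k" | a b where "cov k a" "cov b k" by blast
    then have "chi_sum I k - chi_sum I (n - k + 1) = 0"
    proof cases
      case 1
      then show ?thesis using chi_sum_diff_of_maximal[OF I k] zero k by simp
    next
      case 2
      then show ?thesis using chi_sum_diff_of_minimal[OF I k] zero k by simp
    next
      case (3 a b)
      then show ?thesis using chi_sum_diff_of_interior(1)[OF I 3] zero k fence_cover_in by simp
    qed
    then show "chi_sum I k = chi_sum I (n - k + 1)" by simp
  qed
qed

end

theorem corollary5p11:
  fixes \<alpha> :: "nat list"
  assumes "length \<alpha> \<ge> 2"
    and "\<forall>a\<in>set \<alpha>. a > 0"
    and "hd \<alpha> \<ge> 2" and "last \<alpha> \<ge> 2"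
    and "rev \<alpha> = \<alpha>"
    and "odd (length \<alpha>)"
  shows "(\<forall>k\<in>{1..fence_n \<alpha>}.
            mesic (fence_elems \<alpha>) (fence_le \<alpha>)
              (\<lambda>I. chi (fence_le \<alpha>) k I - chi (fence_le \<alpha>) (fence_n \<alpha> - k + 1) I) 0)
     \<longleftrightarrow>
         (\<forall>k\<in>{1..fence_n \<alpha>}.
            mesic (fence_elems \<alpha>) (fence_le \<alpha>)
              (\<lambda>I. hat_chi k I + hat_chi (fence_n \<alpha> - k + 1) I) 1)"
proof -
  interpret palindromic_fence \<alpha> using assms(5,6) by unfold_locales
  have chi_mesic: "mesic (fence_elems \<alpha>) (fence_le \<alpha>)
      (\<lambda>I. chi (fence_le \<alpha>) k I - chi (fence_le \<alpha>) (n - k + 1) I) 0 \<longleftrightarrow>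
    (\<forall>I\<in>ideals {1..n} le. chi_sum I k = chi_sum I (n - k + 1))" for k
    unfolding fence_elems_def fence_le_def mesic_iff_orbit_sum chi_sum_def sum_subtractf by simp
  have hat_chi_mesic: "mesic (fence_elems \<alpha>) (fence_le \<alpha>)
      (\<lambda>I. hat_chi k I + hat_chi (n - k + 1) I) 1 \<longleftrightarrow> (\<forall>I\<in>ideals {1..n} le. defect I k = 0)" for k
    unfolding fence_elems_def fence_le_def mesic_iff_orbit_sum defect_def hat_chi_sum_def sum.distrib
    by simp
  show ?thesis
    unfolding chi_mesic hat_chi_mesic using chi_sums_symmetric_iff_defect_eq_0 by blast
qed

end
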